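(* Let $v$ be an arbitrary nonempty word of length $m$ whose letters are positive integers (repetitions allowed), and let $n\ge m$. Then the map ${\bf F}_3$ defined below restricts to a bijection of $\mathrm{Sh}(0^{n-m}v)$ onto itself, and for every $w\in\mathrm{Sh}(0^{n-m}v)$: $$\mathrm{maj}\,w=\mathrm{mafz}\,{\bf F}_3(w),$$ and the last (rightmost) letter of $w$ equals the last letter of ${\bf F}_3(w)$.
   Context: Words have nonnegative integer letters. For $w=x_1\cdots x_n$: $\mathrm{DES}\,w=\{i:1\le i\le n-1,\ x_i>x_{i+1}\}$, $\mathrm{maj}\,w=\sum_{i\in\mathrm{DES}\,w}i$; $\mathrm{Zero}\,w=\{i:x_i=0\}$, $\mathrm{zero}\,w=\#\mathrm{Zero}\,w$; $\mathrm{Pos}\,w$ is the subword of positive letters. $\mathrm{mafz}\,w=\sum_{i\in\mathrm{Zero}\,w}i-\sum_{i=1}^{\mathrm{zero}\,w}i+\mathrm{maj}\,\mathrm{Pos}\,w$. For a word $v$ of positive integers of length $m\le n$, $\mathrm{Sh}(0^{n-m}v)$ is the set of words of length $n$ with exactly $n-m$ zeros and with $\mathrm{Pos}\,w=v$. The map ${\bf F}_3$ on all finite words with nonnegative letters is defined by induction on the length $n$. If $n\le1$, or if all letters of $w$ other than the last are $0$, then ${\bf F}_3(w)=w$. Otherwise write uniquely $w=w'a0^rb$, where $a\ge1$ is the rightmost positive letter among the first $n-1$ letters, $r\ge0$, $b\ge0$ is the last letter, and $w'$ is a (possibly empty) word. (1) If $a\le b$: ${\bf F}_3(w)={\bf F}_3(w'a0^r)\,b$.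 (2) If $a>b$ and $r\ge1$: write ${\bf F}_3(w'a0^r)=w''c$ with $c$ a letter; then ${\bf F}_3(w)=0\,w''\,b$ (i.e. add a $0$ on the left, delete the rightmost letter, which is a $0$, and append $b$). (3) If $a>b$ and $r=0$: write ${\bf F}_3(w'a)=0^{m_1}x_1v_10^{m_2}x_2v_2\cdots0^{m_k}x_kv_k$ with $m_1\ge0$, $m_2,\dots,m_k\ge1$, $x_1,\dots,x_k$ positive letters and $v_1,\dots,v_k$ (possibly empty) words of positive letters; let $\delta({\bf F}_3(w'a))=x_10^{m_1}v_1x_20^{m_2}v_2\cdots x_k0^{m_k}v_k$, and set ${\bf F}_3(w)=\delta({\bf F}_3(w'a))\,b$. *)

theory Defs
  imports Main
begin

text \<open>Words are lists of natural numbers; positions are 1-indexed as in the paper.\<close>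

definition DES :: "nat list \<Rightarrow> nat set" where
  "DES w = {i. 1 \<le> i \<and> i \<le> length w - 1 \<and> w ! (i - 1) > w ! i}"

definition maj :: "nat list \<Rightarrow> nat" where
  "maj w = (\<Sum>i\<in>DES w. i)"

definition Zero :: "nat list \<Rightarrow> nat set" where
  "Zero w = {i. 1 \<le> i \<and> i \<le> length w \<and> w ! (i - 1) = 0}"

definition zero :: "nat list \<Rightarrow> nat" where
  "zero w = card (Zero w)"

definition Pos :: "nat list \<Rightarrow> nat list" where
  "Pos w = filter (\<lambda>x. 0 < x) w"

definition mafz :: "nat list \<Rightarrow> nat" where
  "mafz w = (\<Sum>i\<in>Zero w. i) - (\<Sum>i=1..zero w. i) + maj (Pos w)"

definition Sh :: "nat \<Rightarrow> nat list \<Rightarrow> nat list set" where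
  "Sh n v = {w. length w = n \<and> zero w = n - length v \<and> Pos w = v}"

text \<open>The map delta: 0^{m1} x1 v1 0^{m2} x2 v2 ... |-> x1 0^{m1} v1 x2 0^{m2} v2 ...
  (blocks: maximal zero run, then a positive letter x_i, then maximal positive run v_i).
  A trailing run of zeros (not occurring in the intended use) is left unchanged.\<close>
function delta :: "nat list \<Rightarrow> nat list" where
  "delta xs =
    (if dropWhile (\<lambda>x. x = 0) xs = [] then xs
     else hd (dropWhile (\<lambda>x. x = 0) xs) # replicate (length (takeWhile (\<lambda>x. x = 0) xs)) 0
          @ takeWhile (\<lambda>x. 0 < x) (tl (dropWhile (\<lambda>x. x = 0) xs))
          @ delta (dropWhile (\<lambda>x. 0 < x) (tl (dropWhile (\<lambda>x. x = 0) xs))))"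
  by pat_completeness auto
termination
proof (relation "measure length")
  show "wf (measure length)" by simp
next
  fix xs :: "nat list"
  assume "dropWhile (\<lambda>x. x = 0) xs \<noteq> []"
  then have "length (tl (dropWhile (\<lambda>x. x = 0) xs)) < length xs"
    using length_dropWhile_le[of "\<lambda>x. x = 0" xs] by (cases "dropWhile (\<lambda>x. x = 0) xs") auto
  moreover have "length (dropWhile (\<lambda>x. 0 < x) (tl (dropWhile (\<lambda>x. x = 0) xs)))
      \<le> length (tl (dropWhile (\<lambda>x. x = 0) xs))" by (rule length_dropWhile_le)
  ultimately show "(dropWhile (\<lambda>x. 0 < x) (tl (dropWhile (\<lambda>x. x = 0) xs)), xs) \<in> measure length"
    by simp
qed

text \<open>For w = w' a 0^r b (b = last w, a the rightmost positive letter of butlast w),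
  r = number of trailing zeros of butlast w, a = last letter of butlast w after removing them.
  In all three cases the recursive call is on w' a 0^r = butlast w (in case (3) r = 0).\<close>
function F3 :: "nat list \<Rightarrow> nat list" where
  "F3 w =
    (if length w \<le> 1 \<or> (\<forall>x\<in>set (butlast w). x = 0) then w
     else if hd (dropWhile (\<lambda>x. x = 0) (rev (butlast w))) \<le> last w
       then F3 (butlast w) @ [last w]
     else if 1 \<le> length (takeWhile (\<lambda>x. x = 0) (rev (butlast w)))
       then 0 # butlast (F3 (butlast w)) @ [last w]
     else delta (F3 (butlast w)) @ [last w])"
  by pat_completeness auto
termination
  by (relation "measure length") auto

end

theory Submission
  imports Defs
begin

(* Appending a letter b to u appends b to F3 u, unless b is smaller than the last positive
   letter a of u; then F3 u first undergoes a descent step: a trailing 0 is rotated to the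
   front, otherwise delta is applied.  Measure a word by the sum of the positions of its zeros
   plus maj of its positive subword.  Each step changes this measure exactly as it changes
   maj w + (1 + ... + zero w).  For instance, delta moves every 0 one place to the right,
   adding the number of zeros, which with the new descent a > b of the positive subword makes
   length u, the new descent of u b; the rotation lowers the zero positions by the number of
   positive letters, cancelling the descent a > b, as u b (u ending in 0) gets no new descent.
   Hence maj w + (1 + ... + zero w) is the measure of F3 w, i.e. mafz (F3 w) + (1 + ... + zero w).
   F3 preserves length and positive subword, and it is injective since every step can be
   undone: delta is injective on words ending in a positive letter, and its values begin with
   a positive letter whereas the rotation produces a leading 0. *)

lemma finite_Zero: "finite (Zero w)"
  by (rule finite_subset[of _ "{1..length w}"]) (auto simp: Zero_def)

lemma Zero_append: "Zero (u @ w) = Zero u \<union> (\<lambda>i. i + length u) ` Zero w"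
proof (rule set_eqI)
  fix i
  show "i \<in> Zero (u @ w) \<longleftrightarrow> i \<in> Zero u \<union> (\<lambda>i. i + length u) ` Zero w"
  proof (cases "i \<le> length u")
    case True
    then show ?thesis by (auto simp: Zero_def nth_append)
  next
    case False
    then obtain j where "i = Suc j + length u"
      by (metis add.commute add_Suc_right less_imp_Suc_add not_le)
    with False show ?thesis by (force simp: Zero_def nth_append)
  qed
qed

lemma zero_append [simp]: "zero (u @ w) = zero u + zero w"
  unfolding zero_def Zero_append
  by (subst card_Un_disjoint) (auto simp: finite_Zero card_image Zero_def)

lemma sum_Zero_append [simp]: "\<Sum>(Zero (u @ w)) = \<Sum>(Zero u) + \<Sum>(Zero w) + length u * zero w"
  unfolding zero_def Zero_append
  by (subst sum.union_disjoint)
    (auto simp: finite_Zero sum.reindex sum.distrib Zero_def)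

lemma Zero_single: "Zero [x] = (if x = 0 then {1} else {})"
  by (auto simp: Zero_def)

lemma zero_Nil [simp]: "zero [] = 0"
  by (simp add: zero_def Zero_def)

lemma sum_Zero_Nil [simp]: "\<Sum>(Zero []) = 0"
  by (simp add: Zero_def)

lemma zero_Cons [simp]: "zero (x # w) = (if x = 0 then Suc (zero w) else zero w)"
  using zero_append[of "[x]" w] by (simp add: zero_def Zero_single)

lemma sum_Zero_Cons [simp]: "\<Sum>(Zero (x # w)) = (if x = 0 then 1 else 0) + \<Sum>(Zero w) + zero w"
  using sum_Zero_append[of "[x]" w] by (simp add: Zero_single)

lemma Zero_replicate: "Zero (replicate m 0) = {1..m}"
  by (auto simp: Zero_def)

lemma Zero_positive: "\<forall>p\<in>set P. 0 < p \<Longrightarrow> Zero P = {}"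
  by (auto simp: Zero_def)

lemma zero_replicate [simp]: "zero (replicate m 0) = m"
  by (simp add: zero_def Zero_replicate)

lemma zero_positive: "\<forall>p\<in>set P. 0 < p \<Longrightarrow> zero P = 0"
  by (simp add: zero_def Zero_positive)

lemma zero_add_length_Pos: "zero w + length (Pos w) = length w"
  by (induction w) (auto simp: Pos_def)

lemma triangle_zero_le_sum_Zero: "\<Sum>{1..zero w} \<le> \<Sum>(Zero w)"
  by (induction w) auto

lemma maj_Nil [simp]: "maj [] = 0"
  by (simp add: maj_def DES_def)

lemma maj_snoc: "maj (u @ [b]) = maj u + (if u \<noteq> [] \<and> b < last u then length u else 0)"
proof -
  have DES_snoc: "DES (u @ [b]) = DES u \<union> (if u \<noteq> [] \<and> b < last u then {length u} else {})"
    by (cases u rule: rev_cases) (auto simp: DES_def nth_append)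
  have "finite (DES u)" "length u \<notin> DES u"
    by (rule finite_subset[of _ "{1..length u}"]) (auto simp: DES_def)
  then show ?thesis
    unfolding maj_def DES_snoc by auto
qed

(* mafz without the correction by 1 + ... + zero w, which would need truncated subtraction *)
definition raw_mafz :: "nat list \<Rightarrow> nat" where
  "raw_mafz w = \<Sum>(Zero w) + maj (Pos w)"

lemma mafz_add_triangle: "mafz w + \<Sum>{1..zero w} = raw_mafz w"
  using triangle_zero_le_sum_Zero[of w] by (simp add: mafz_def raw_mafz_def)

lemma Pos_snoc: "Pos (u @ [b]) = Pos u @ (if b = 0 then [] else [b])"
  by (simp add: Pos_def)

lemma last_Pos: "u \<noteq> [] \<Longrightarrow> 0 < last u \<Longrightarrow> Pos u \<noteq> [] \<and> last (Pos u) = last u"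
  by (cases u rule: rev_cases) (auto simp: Pos_snoc)

lemma last_Pos_pos: "Pos u \<noteq> [] \<Longrightarrow> 0 < last (Pos u)"
  using last_in_set[of "Pos u"] by (auto simp: Pos_def)

lemma raw_mafz_snoc:
  "raw_mafz (x @ [b]) = raw_mafz x +
    (if b = 0 then Suc (length x) else if Pos x \<noteq> [] \<and> b < last (Pos x) then length (Pos x) else 0)"
  using maj_snoc[of "Pos x" b] by (simp add: raw_mafz_def Pos_snoc)

lemma raw_mafz_Cons_zero: "raw_mafz (0 # x) = raw_mafz x + Suc (zero x)"
  by (simp add: raw_mafz_def Pos_def)

declare delta.simps [simp del] F3.simps [simp del]

lemma delta_Nil [simp]: "delta [] = []"
  by (subst delta.simps) simp

lemma delta_block:
  assumes "0 < d" "\<forall>p\<in>set P. 0 < p" "rest = [] \<or> hd rest = 0"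
  shows "delta (replicate m 0 @ d # P @ rest) = d # replicate m 0 @ P @ delta rest"
proof -
  have "takeWhile (\<lambda>x. x = 0) (replicate m 0 @ d # L) = replicate m 0"
    "dropWhile (\<lambda>x. x = 0) (replicate m 0 @ d # L) = d # L" for L
    using assms(1) by (induction m) auto
  moreover have "takeWhile (\<lambda>x. 0 < x) rest = [] \<and> dropWhile (\<lambda>x. 0 < x) rest = rest"
    using assms(3) by (cases rest) auto
  ultimately show ?thesis
    using assms(1,2) by (subst delta.simps) (simp add: takeWhile_append2 dropWhile_append2)
qed

lemma delta_block_Nil:
  "0 < d \<Longrightarrow> \<forall>p\<in>set P. 0 < p \<Longrightarrow> delta (replicate m 0 @ d # P) = d # replicate m 0 @ P"
  using delta_block[of d P "[]"] by simp

lemma block_decomposition: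
  fixes x :: "nat list"
  assumes "x \<noteq> []" "0 < last x"
  obtains m d P rest where "x = replicate m 0 @ d # P @ rest" "0 < d" "\<forall>p\<in>set P. 0 < p"
    "rest = [] \<or> hd rest = 0 \<and> 0 < last rest"
proof -
  define m where "m = length (takeWhile (\<lambda>x. x = 0) x)"
  have zeros: "takeWhile (\<lambda>x. x = 0) x = replicate m 0"
    unfolding m_def by (metis (mono_tags) set_takeWhileD replicate_length_same)
  have "dropWhile (\<lambda>x. x = 0) x \<noteq> []"
  proof
    assume "dropWhile (\<lambda>x. x = 0) x = []"
    then have "x = replicate m 0"
      by (metis append_Nil2 takeWhile_dropWhile_id zeros)
    with assms show False by (simp add: last_replicate)
  qed
  then obtain d T where dT: "dropWhile (\<lambda>x. x = 0) x = d # T"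
    by (cases "dropWhile (\<lambda>x. x = 0) x") auto
  define P where "P = takeWhile (\<lambda>x. 0 < x) T"
  define rest where "rest = dropWhile (\<lambda>x. 0 < x) T"
  have "0 < d" and x: "x = replicate m 0 @ d # P @ rest"
    using dT zeros dropWhile_eq_Cons_conv[of "\<lambda>x. x = 0" x d T] by (auto simp: P_def rest_def)
  moreover have "\<forall>p\<in>set P. 0 < p"
    unfolding P_def by (blast dest: set_takeWhileD)
  moreover have "rest = [] \<or> hd rest = 0 \<and> 0 < last rest"
  proof (cases "rest = []")
    case False
    then have "hd rest = 0"
      using hd_dropWhile[of "\<lambda>x. 0 < x" T] unfolding rest_def by simp
    moreover have "last rest = last x"
      using x False by simp
    ultimately show ?thesis using assms(2) by simp
  qed simp
  ultimately show ?thesis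
    using that by blast
qed

lemma delta_induct [consumes 1, case_names Nil block]:
  fixes x :: "nat list"
  assumes "x = [] \<or> 0 < last x"
    and "Q []"
    and "\<And>m d P rest. 0 < d \<Longrightarrow> \<forall>p\<in>set P. 0 < p \<Longrightarrow> rest = [] \<or> hd rest = 0 \<and> 0 < last rest
           \<Longrightarrow> Q rest \<Longrightarrow> Q (replicate m 0 @ d # P @ rest)"
  shows "Q x"
  using assms(1)
proof (induction "length x" arbitrary: x rule: less_induct)
  case less
  show ?case
  proof (cases "x = []")
    case True
    then show ?thesis using assms(2) by simp
  next
    case False
    with less.prems have "0 < last x" by simp
    then obtain m d P rest where x: "x = replicate m 0 @ d # P @ rest"
      and "0 < d" "\<forall>p\<in>set P. 0 < p" and rest: "rest = [] \<or> hd rest = 0 \<and> 0 < last rest"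
      by (rule block_decomposition[OF False])
    moreover have "Q rest"
      using less.hyps[of rest] x rest by auto
    ultimately show ?thesis using assms(3) by blast
  qed
qed

lemma length_delta: "x = [] \<or> 0 < last x \<Longrightarrow> length (delta x) = length x"
  by (induction x rule: delta_induct) (auto simp: delta_block delta_block_Nil)

lemma Pos_delta: "x = [] \<or> 0 < last x \<Longrightarrow> Pos (delta x) = Pos x"
  by (induction x rule: delta_induct) (auto simp: delta_block delta_block_Nil Pos_def)

lemma zero_delta: "x = [] \<or> 0 < last x \<Longrightarrow> zero (delta x) = zero x"
  using zero_add_length_Pos[of x] zero_add_length_Pos[of "delta x"] length_delta Pos_delta
  by simp

lemma sum_Zero_delta: "x = [] \<or> 0 < last x \<Longrightarrow> \<Sum>(Zero (delta x)) = \<Sum>(Zero x) + zero x"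
  by (induction x rule: delta_induct)
    (auto simp: delta_block delta_block_Nil zero_delta Zero_replicate Zero_positive zero_positive)

lemma raw_mafz_delta: "x = [] \<or> 0 < last x \<Longrightarrow> raw_mafz (delta x) = raw_mafz x + zero x"
  by (simp add: raw_mafz_def sum_Zero_delta Pos_delta)

lemma hd_delta_pos: "x \<noteq> [] \<Longrightarrow> 0 < last x \<Longrightarrow> 0 < hd (delta x)"
  by (elim block_decomposition) (auto simp: delta_block delta_block_Nil)

lemma delta_shape:
  assumes "rest = [] \<or> hd rest = 0 \<and> 0 < last rest"
  shows "delta rest = [] \<or> (\<exists>a t. delta rest = a # 0 # t \<and> 0 < a)"
proof (cases "rest = []")
  case False
  with assms have "0 < last rest" by simp
  then obtain m d P r where rest: "rest = replicate m 0 @ d # P @ r" "0 < d"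
    "\<forall>p\<in>set P. 0 < p" "r = [] \<or> hd r = 0 \<and> 0 < last r"
    by (rule block_decomposition[OF False])
  with False assms have "m \<noteq> 0" by (cases m) auto
  moreover have "delta rest = d # replicate m 0 @ P @ delta r"
    unfolding rest(1) by (rule delta_block) (use rest in auto)
  ultimately show ?thesis using rest(2) by (cases m) auto
qed simp

lemma block_parse_unique:
  fixes D D' :: "nat list"
  assumes eq: "replicate m 0 @ P @ D = replicate m' 0 @ P' @ D'"
    and P: "\<forall>p\<in>set P. 0 < p" and P': "\<forall>p\<in>set P'. 0 < p"
    and D: "D = [] \<or> (\<exists>a t. D = a # 0 # t \<and> 0 < a)"
    and D': "D' = [] \<or> (\<exists>a t. D' = a # 0 # t \<and> 0 < a)"
  shows "m = m' \<and> P = P' \<and> D = D'"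
proof -
  have zeros: "takeWhile (\<lambda>x. x = 0) (replicate k 0 @ L) = replicate k 0 \<and>
      dropWhile (\<lambda>x. x = 0) (replicate k 0 @ L) = L"
    if "L = [] \<or> hd L \<noteq> 0" for k and L :: "nat list"
  proof -
    have "takeWhile (\<lambda>x. x = 0) L = [] \<and> dropWhile (\<lambda>x. x = 0) L = L"
      using that by (cases L) auto
    then show ?thesis by (induction k) auto
  qed
  have "P @ D = [] \<or> hd (P @ D) \<noteq> 0"
    using P D by (cases P) auto
  then have "replicate m 0 = takeWhile (\<lambda>x. x = 0) (replicate m 0 @ P @ D)"
    using zeros by simp
  also have "\<dots> = replicate m' 0"
    unfolding eq using zeros P' D' by (cases P') auto
  finally have "m = m'" by simp
  with eq have PD: "P @ D = P' @ D'" by simp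
  have positives: "takeWhile (\<lambda>x. 0 < x) (Q @ E) = Q @ take 1 E \<and>
      dropWhile (\<lambda>x. 0 < x) (Q @ E) = drop 1 E"
    if "\<forall>p\<in>set Q. 0 < p" "E = [] \<or> (\<exists>a t. E = a # 0 # t \<and> 0 < a)" for Q and E :: "nat list"
    using that by (auto simp: takeWhile_append2 dropWhile_append2)
  have "takeWhile (\<lambda>x. 0 < x) (P @ D) = takeWhile (\<lambda>x. 0 < x) (P' @ D')"
    "dropWhile (\<lambda>x. 0 < x) (P @ D) = dropWhile (\<lambda>x. 0 < x) (P' @ D')"
    using PD by simp_all
  then have take: "P @ take 1 D = P' @ take 1 D'" and drop: "drop 1 D = drop 1 D'"
    by (simp_all add: positives[OF P D] positives[OF P' D'])
  have "D = [] \<longleftrightarrow> D' = []"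
    using D D' drop by auto
  then have "P = P' \<and> D = D'"
    using D D' take drop by (cases "D = []") auto
  with \<open>m = m'\<close> show ?thesis by simp
qed

lemma delta_inj:
  "x = [] \<or> 0 < last x \<Longrightarrow> y = [] \<or> 0 < last y \<Longrightarrow> delta x = delta y \<Longrightarrow> x = y"
proof (induction x arbitrary: y rule: delta_induct)
  case Nil
  then show ?case using length_delta[of y] by auto
next
  case (block m d P rest)
  have dx: "delta (replicate m 0 @ d # P @ rest) = d # replicate m 0 @ P @ delta rest"
    by (rule delta_block) (use block.hyps in auto)
  then have "y \<noteq> []"
    using block.prems(2) by auto
  with block.prems(1) have "0 < last y" by simp
  then obtain m' d' P' rest' where y: "y = replicate m' 0 @ d' # P' @ rest'" and "0 < d'"
    and P': "\<forall>p\<in>set P'. 0 < p" and rest': "rest' = [] \<or> hd rest' = 0 \<and> 0 < last rest'"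
    by (rule block_decomposition[OF \<open>y \<noteq> []\<close>])
  have "delta y = d' # replicate m' 0 @ P' @ delta rest'"
    unfolding y by (rule delta_block) (use \<open>0 < d'\<close> P' rest' in auto)
  then have "d # replicate m 0 @ P @ delta rest = d' # replicate m' 0 @ P' @ delta rest'"
    using block.prems(2) dx by simp
  then have "d = d'" and tail: "replicate m 0 @ P @ delta rest = replicate m' 0 @ P' @ delta rest'"
    by simp_all
  then have "m = m'" "P = P'" "delta rest = delta rest'"
    using block_parse_unique[OF tail block.hyps(2) P' delta_shape[OF block.hyps(3)] delta_shape[OF rest']]
    by simp_all
  moreover have "rest = rest'"
    using block.IH rest' \<open>delta rest = delta rest'\<close> by auto
  ultimately show ?case
    unfolding y using \<open>d = d'\<close> by simp
qed

(* Cases (2) and (3) of F3, applied to f = F3 (w' a 0^r): since last f = last (w' a 0^r)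
   (lemma last_F3), r \<ge> 1 holds iff last f = 0. *)
definition descent_step :: "nat list \<Rightarrow> nat list" where
  "descent_step f = (if last f = 0 then 0 # butlast f else delta f)"

lemma length_descent_step: "f \<noteq> [] \<Longrightarrow> length (descent_step f) = length f"
  by (simp add: descent_step_def length_delta)

lemma Pos_descent_step: "f \<noteq> [] \<Longrightarrow> Pos (descent_step f) = Pos f"
proof (cases "last f = 0")
  case True
  moreover assume "f \<noteq> []"
  ultimately have "f = butlast f @ [0]"
    by (metis append_butlast_last_id)
  then have "Pos f = Pos (butlast f)"
    by (metis Pos_def filter.simps append_Nil2 filter_append less_irrefl)
  with True show ?thesis
    by (simp add: descent_step_def Pos_def)
qed (simp add: descent_step_def Pos_delta)

lemma raw_mafz_descent_step:
  assumes "Pos f \<noteq> []" "b < last (Pos f)"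
  shows "raw_mafz (descent_step f @ [b]) =
    raw_mafz f + (if last f = 0 then 0 else length f) + (if b = 0 then Suc (zero f) else 0)"
proof (cases "last f = 0")
  case True
  have "f \<noteq> []" using assms(1) by (auto simp: Pos_def)
  then obtain y where f: "f = y @ [0]"
    using True by (metis append_butlast_last_id)
  then have "Pos y = Pos f" "zero f = Suc (zero y)" "raw_mafz f = raw_mafz y + Suc (length y)"
    by (simp_all add: Pos_def raw_mafz_snoc)
  moreover have "raw_mafz (0 # y @ [b]) = raw_mafz (0 # y) +
      (if b = 0 then Suc (Suc (length y)) else length (Pos y))"
    using raw_mafz_snoc[of "0 # y" b] assms \<open>Pos y = Pos f\<close> by (simp add: Pos_def)
  ultimately show ?thesis
    using f zero_add_length_Pos[of y] raw_mafz_Cons_zero[of y] by (simp add: descent_step_def)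
next
  case False
  then have "f = [] \<or> 0 < last f" by simp
  then show ?thesis
    using False raw_mafz_snoc[of "delta f" b] assms zero_add_length_Pos[of f]
    by (simp add: descent_step_def raw_mafz_delta length_delta Pos_delta)
qed

lemma descent_step_inj:
  assumes "f \<noteq> []" "g \<noteq> []" "descent_step f = descent_step g"
  shows "f = g"
proof -
  have head: "0 < hd (descent_step h)" if "h \<noteq> []" "last h \<noteq> 0" for h
    using hd_delta_pos that by (simp add: descent_step_def)
  consider "last f = 0" "last g = 0" | "last f \<noteq> 0" "last g \<noteq> 0"
    | "last f = 0" "last g \<noteq> 0" | "last f \<noteq> 0" "last g = 0"
    by blast
  then show ?thesis
  proof cases
    case 1
    then have "butlast f = butlast g"
      using assms(3) by (simp add: descent_step_def)
    with 1 assms(1,2) show ?thesis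
      by (metis append_butlast_last_id)
  next
    case 2
    then show ?thesis
      using delta_inj assms by (simp add: descent_step_def)
  next
    case 3
    then have "hd (descent_step f) = 0" "0 < hd (descent_step g)"
      using head[OF assms(2)] by (simp_all add: descent_step_def)
    then show ?thesis using assms(3) by simp
  next
    case 4
    then have "0 < hd (descent_step f)" "hd (descent_step g) = 0"
      using head[OF assms(1)] by (simp_all add: descent_step_def)
    then show ?thesis using assms(3) by simp
  qed
qed

lemma F3_Pos_Nil: "Pos u = [] \<Longrightarrow> F3 u = u"
  by (subst F3.simps) (auto simp: Pos_def filter_empty_conv dest: in_set_butlastD)

lemma last_F3: "last (F3 w) = last w"
  by (subst F3.simps) simp

lemma hd_dropWhile_zero_rev: "Pos u \<noteq> [] \<Longrightarrow> hd (dropWhile (\<lambda>x. x = 0) (rev u)) = last (Pos u)"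
  by (induction u rule: rev_induct) (auto simp: Pos_def)

lemma F3_snoc:
  "F3 (u @ [b]) = (if Pos u \<noteq> [] \<and> b < last (Pos u) then descent_step (F3 u) @ [b] else F3 u @ [b])"
proof (cases "Pos u = []")
  case True
  then have "F3 (u @ [b]) = u @ [b]"
    by (subst F3.simps) (simp add: Pos_def filter_empty_conv)
  with True show ?thesis
    by (simp add: F3_Pos_Nil)
next
  case False
  then have "u \<noteq> []" and nonzero: "\<not> (\<forall>x\<in>set u. x = 0)"
    by (auto simp: Pos_def filter_empty_conv)
  then have "(1 \<le> length (takeWhile (\<lambda>x. x = 0) (rev u))) = (last (F3 u) = 0)"
    by (cases u rule: rev_cases) (auto simp: last_F3)
  then have "F3 (u @ [b]) = (if last (Pos u) \<le> b then F3 u @ [b]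
      else if last (F3 u) = 0 then 0 # butlast (F3 u) @ [b] else delta (F3 u) @ [b])"
    using \<open>u \<noteq> []\<close> by (simp add: F3.simps[of "u @ [b]"] nonzero hd_dropWhile_zero_rev[OF False])
  with False show ?thesis
    by (simp add: descent_step_def not_le)
qed

lemma length_F3: "length (F3 w) = length w"
proof (induction w rule: rev_induct)
  case (snoc b u)
  then have "Pos u \<noteq> [] \<Longrightarrow> F3 u \<noteq> []"
    by (auto simp: Pos_def)
  with snoc show ?case
    by (simp add: F3_snoc length_descent_step)
qed (simp add: F3_Pos_Nil Pos_def)

lemma Pos_F3: "Pos (F3 w) = Pos w"
proof (induction w rule: rev_induct)
  case (snoc b u)
  have "Pos u \<noteq> [] \<Longrightarrow> F3 u \<noteq> []"
    using length_F3[of u] by (auto simp: Pos_def)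
  with snoc show ?case
    by (simp add: F3_snoc Pos_descent_step Pos_snoc)
qed (simp add: F3_Pos_Nil Pos_def)

lemma zero_F3: "zero (F3 w) = zero w"
  using zero_add_length_Pos[of w] zero_add_length_Pos[of "F3 w"] by (simp add: length_F3 Pos_F3)

lemma maj_add_triangle_eq_raw_mafz_F3: "maj w + \<Sum>{1..zero w} = raw_mafz (F3 w)"
proof (induction w rule: rev_induct)
  case Nil
  show ?case by (simp add: F3_Pos_Nil Pos_def raw_mafz_def Zero_def)
next
  case (snoc b u)
  have triangle: "\<Sum>{1..zero (u @ [b])} = \<Sum>{1..zero u} + (if b = 0 then Suc (zero u) else 0)"
    by simp
  show ?case
  proof (cases "Pos u \<noteq> [] \<and> b < last (Pos u)")
    case True
    then have "u \<noteq> []" by (auto simp: Pos_def)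
    with True have "b < last u \<longleftrightarrow> last u \<noteq> 0"
      using last_Pos[of u] by (cases "last u = 0") auto
    with \<open>u \<noteq> []\<close> have "maj (u @ [b]) = maj u + (if last u = 0 then 0 else length u)"
      by (simp add: maj_snoc)
    moreover have "raw_mafz (F3 (u @ [b])) =
        raw_mafz (F3 u) + (if last u = 0 then 0 else length u) + (if b = 0 then Suc (zero u) else 0)"
      using raw_mafz_descent_step[of "F3 u" b] True
      by (simp add: F3_snoc Pos_F3 last_F3 length_F3 zero_F3)
    ultimately show ?thesis
      using snoc.IH triangle by simp
  next
    case False
    have "\<not> (u \<noteq> [] \<and> b < last u)"
    proof
      assume "u \<noteq> [] \<and> b < last u"
      with last_Pos[of u] have "Pos u \<noteq> [] \<and> b < last (Pos u)" by auto
      with False show False by blast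
    qed
    then have "maj (u @ [b]) = maj u"
      by (simp add: maj_snoc)
    moreover have "b = 0 \<Longrightarrow> length u = zero u"
      using False last_Pos_pos zero_add_length_Pos[of u] by (cases "Pos u = []") auto
    moreover have "F3 (u @ [b]) = F3 u @ [b]"
      using False unfolding F3_snoc by (rule if_not_P)
    ultimately have "raw_mafz (F3 (u @ [b])) = raw_mafz (F3 u) + (if b = 0 then Suc (zero u) else 0)"
      using raw_mafz_snoc[of "F3 u" b] by (simp add: Pos_F3 length_F3 if_not_P[OF False])
    with \<open>maj (u @ [b]) = maj u\<close> show ?thesis
      using snoc.IH triangle by simp
  qed
qed

lemma F3_inj: "length w = length w' \<Longrightarrow> Pos w = Pos w' \<Longrightarrow> F3 w = F3 w' \<Longrightarrow> w = w'"
proof (induction w arbitrary: w' rule: rev_induct)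
  case (snoc b u)
  then obtain u' b' where w': "w' = u' @ [b']"
    by (metis length_0_conv rev_exhaust snoc_eq_iff_butlast)
  have "b' = b"
    using last_F3[of w'] last_F3[of "u @ [b]"] snoc.prems(3) w' by simp
  then have "length u = length u'" and "Pos u = Pos u'"
    using snoc.prems(1,2) w' by (simp_all add: Pos_snoc)
  moreover have "F3 u = F3 u'"
  proof (cases "Pos u \<noteq> [] \<and> b < last (Pos u)")
    case True
    then have "descent_step (F3 u) = descent_step (F3 u')"
      using snoc.prems(3) w' \<open>b' = b\<close> \<open>Pos u = Pos u'\<close> by (simp add: F3_snoc)
    moreover have "F3 u \<noteq> []" "F3 u' \<noteq> []"
      using True Pos_F3[of u] Pos_F3[of u'] \<open>Pos u = Pos u'\<close> by (auto simp: Pos_def)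
    ultimately show ?thesis
      using descent_step_inj by blast
  next
    case False
    then have "F3 (u @ [b]) = F3 u @ [b]"
      unfolding F3_snoc by (rule if_not_P)
    moreover from False have "F3 (u' @ [b]) = F3 u' @ [b]"
      unfolding F3_snoc \<open>Pos u = Pos u'\<close> by (rule if_not_P)
    ultimately show ?thesis
      using snoc.prems(3) w' \<open>b' = b\<close> by simp
  qed
  ultimately show ?case
    using snoc.IH w' \<open>b' = b\<close> by simp
qed simp

lemma Sh_eq: "Sh n v = {w. length w = n \<and> Pos w = v}"
  by (auto simp: Sh_def) (metis add_diff_cancel_right' zero_add_length_Pos)

lemma finite_Sh: "finite (Sh n v)"
proof (rule finite_subset)
  show "Sh n v \<subseteq> {w. set w \<subseteq> insert 0 (set v) \<and> length w = n}"
    by (auto simp: Sh_eq Pos_def)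
  show "finite {w. set w \<subseteq> insert 0 (set v) \<and> length w = n}"
    by (rule finite_lists_length_eq) simp
qed

theorem theorem1p2:
  fixes v :: "nat list" and n :: nat
  assumes "v \<noteq> []" and "\<forall>x\<in>set v. 0 < x" and "length v \<le> n"
  shows "bij_betw F3 (Sh n v) (Sh n v) \<and>
         (\<forall>w\<in>Sh n v. maj w = mafz (F3 w) \<and> last w = last (F3 w))"
proof -
  have maps_to: "F3 ` Sh n v \<subseteq> Sh n v"
    by (auto simp: Sh_eq length_F3 Pos_F3)
  have inj: "inj_on F3 (Sh n v)"
    by (rule inj_onI) (auto simp: Sh_eq intro: F3_inj)
  have "bij_betw F3 (Sh n v) (Sh n v)"
    using endo_inj_surj[OF finite_Sh maps_to inj] inj by (simp add: bij_betw_def)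
  moreover have "maj w = mafz (F3 w)" for w
    using maj_add_triangle_eq_raw_mafz_F3[of w] mafz_add_triangle[of "F3 w"] by (simp add: zero_F3)
  ultimately show ?thesis
    by (simp add: last_F3)
qed

end
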